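(* For $k\in\mathcal N$, let $\pi^k$ be the stationary distribution of the single-server queue under the threshold policy with threshold $k$ (active at states $0,\dots,k$, passive at states $\ge k+1$). Then $\sum_{j=0}^k \pi^k(j)$ is an increasing function of $k$.
   Context: Single-server queue: Bernoulli($p$) arrivals, $X_{t+1}=X_t-D_{t+1}+\nu_t\xi_{t+1}$ on $\mathcal N=\{0,1,\dots\}$, $\nu_t\in\{0,1\}$ with arrivals admitted only when $\nu_t=1$; given $X_t=x\ge1$, $D_{t+1}\sim\mathrm{Binomial}(x,q/x)$, no departures at $x=0$; $1>q>2p>0$. Under the threshold-$k$ policy the recurrent class is $\{0,1,\dots,k+1\}$. *)

theory Defs
  imports "HOL-Probability.Probability"
begin

definition thr_policy :: "nat \<Rightarrow> nat \<Rightarrow> bool" where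
  "thr_policy k x \<longleftrightarrow> x \<le> k"

definition queue_trans :: "real \<Rightarrow> real \<Rightarrow> nat \<Rightarrow> nat \<Rightarrow> nat pmf" where
  "queue_trans p q k x =
     bind_pmf (if x = 0 then return_pmf 0 else binomial_pmf x (q / real x)) (\<lambda>d.
     bind_pmf (bernoulli_pmf p) (\<lambda>xi.
       return_pmf (x - d + (if thr_policy k x \<and> xi then 1 else 0))))"

definition stationary :: "real \<Rightarrow> real \<Rightarrow> nat \<Rightarrow> nat pmf \<Rightarrow> bool" where
  "stationary p q k \<pi> \<longleftrightarrow> bind_pmf \<pi> (queue_trans p q k) = \<pi>"

end

theory Submission
  imports Defs
begin

text \<open>
  Write \<open>A\<^sub>k(x, j)\<close> for the probability of moving from \<open>x\<close> to a state \<open>\<le> j\<close> in one step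
  and \<open>a(j)\<close> for the probability of no departure at \<open>j\<close>. A stationary \<open>\<pi>\<close> is supported
  on \<open>{0..k+1}\<close>, and balancing the flow across the cut between \<open>j\<close> and \<open>j + 1\<close> gives
  \<open>p a(j) \<pi>(j) = \<Sum>\<^sub>x\<^sub>>\<^sub>j \<pi>(x) A\<^sub>k(x, j)\<close> for \<open>j \<le> k\<close>. Hence \<open>\<pi>(j) = \<pi>(k+1) u\<^sub>k(j)\<close> for
  ratios \<open>u\<^sub>k\<close> determined by backward recursion from \<open>u\<^sub>k(k+1) = 1\<close>, and the mass of the
  active states is \<open>1 - 1 / \<Sum>\<^sub>j u\<^sub>k(j)\<close>. Raising the threshold to \<open>k + 1\<close> increases every
  ratio: the only new ingredient is \<open>(1 - p) u\<^sub>k\<^sub>+\<^sub>1(k+1) \<ge> 1\<close>, which follows from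
  \<open>a(m) \<le> 1 / (1 + q)\<close> for \<open>m \<ge> 1\<close> together with \<open>2p < q\<close>.
\<close>

lemma measure_bind_pmf:
  "measure (bind_pmf M N) X = (\<integral>x. measure (N x) X \<partial>M)"
  unfolding measure_pmf_bind
  by (rule measure_pmf.measure_bind[where N="count_space UNIV"])
     (auto simp: space_subprob_algebra prob_space_imp_subprob_space prob_space_measure_pmf)

definition departures :: "real \<Rightarrow> nat \<Rightarrow> nat pmf" where
  "departures q x = (if x = 0 then return_pmf 0 else binomial_pmf x (q / real x))"

definition no_departure :: "real \<Rightarrow> nat \<Rightarrow> real" where
  "no_departure q x = pmf (departures q x) 0"

definition trans_cdf :: "real \<Rightarrow> real \<Rightarrow> nat \<Rightarrow> nat \<Rightarrow> nat \<Rightarrow> real" where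
  "trans_cdf p q k x j = measure (queue_trans p q k x) {..j}"

lemma set_pmf_departures:
  assumes "0 < q" "q < 1"
  shows "set_pmf (departures q x) \<subseteq> {..x}"
proof (cases "x = 0")
  case False
  then have "0 < q / real x" "q / real x < 1"
    using assms by (auto simp: divide_less_eq)
  with False show ?thesis by (simp add: departures_def)
qed (simp add: departures_def)

lemma sum_pmf_departures:
  assumes "0 < q" "q < 1"
  shows "(\<Sum>d\<le>x. pmf (departures q x) d) = 1"
  using set_pmf_departures[OF assms] by (intro sum_pmf_eq_1) auto

lemma pmf_departures:
  assumes "0 < q" "q < 1" "0 < x"
  shows "pmf (departures q x) d =
    (if d \<le> x then real (x choose d) * (q / x) ^ d * (1 - q / x) ^ (x - d) else 0)"
proof -
  have "0 \<le> q / real x" "q / real x \<le> 1"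
    using assms by (auto simp: divide_le_eq)
  then show ?thesis using assms by (simp add: departures_def)
qed

lemma pmf_departures_all_pos:
  assumes "0 < q" "q < 1"
  shows "0 < pmf (departures q x) x"
  using assms by (cases "x = 0") (auto simp: departures_def pmf_departures)

lemma no_departure_pos:
  assumes "0 < q" "q < 1"
  shows "0 < no_departure q x"
proof (cases "x = 0")
  case False
  then have "q / real x < 1" using assms by (auto simp: divide_less_eq)
  then show ?thesis using assms False by (simp add: no_departure_def pmf_departures)
qed (simp add: no_departure_def departures_def)

lemma no_departure_le:
  assumes "0 < q" "q < 1" "1 \<le> x"
  shows "no_departure q x \<le> 1 / (1 + q)"
proof -
  define t where "t = q / real x"
  have t: "0 \<le> t" "t < 1" "real x * t = q"
    using assms by (auto simp: t_def divide_less_eq)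
  have "1 + q \<le> (1 + t) ^ x"
    using Bernoulli_inequality[of t x] t by simp
  moreover have "(1 - t) ^ x * (1 + t) ^ x \<le> 1"
  proof -
    have "(1 - t) ^ x * (1 + t) ^ x = (1 - t\<^sup>2) ^ x"
      by (simp add: power_mult_distrib[symmetric] power2_eq_square algebra_simps)
    also have "\<dots> \<le> 1"
      using t by (intro power_le_one) (auto simp: power2_eq_square mult_le_one)
    finally show ?thesis .
  qed
  ultimately have "(1 - t) ^ x * (1 + q) \<le> 1"
    using t by (meson mult_left_mono order_trans zero_le_power diff_ge_0_iff_ge less_imp_le)
  moreover have "no_departure q x = (1 - t) ^ x"
    using assms by (simp add: no_departure_def pmf_departures t_def)
  ultimately show ?thesis using assms by (simp add: field_simps)
qed

definition cdf_given_departures :: "real \<Rightarrow> nat \<Rightarrow> nat \<Rightarrow> nat \<Rightarrow> nat \<Rightarrow> real" where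
  "cdf_given_departures p k x j d =
     (if x \<le> k then p * of_bool (x - d + 1 \<le> j) + (1 - p) * of_bool (x - d \<le> j)
      else of_bool (x - d \<le> j))"

lemma trans_cdf_eq_sum:
  assumes "0 \<le> p" "p \<le> 1" "0 < q" "q < 1"
  shows "trans_cdf p q k x j = (\<Sum>d\<le>x. cdf_given_departures p k x j d * pmf (departures q x) d)"
proof -
  have "trans_cdf p q k x j = (\<integral>d. cdf_given_departures p k x j d \<partial>departures q x)"
    unfolding trans_cdf_def queue_trans_def departures_def[symmetric] measure_bind_pmf
    using assms
    by (intro Bochner_Integration.integral_cong refl)
       (auto simp: cdf_given_departures_def thr_policy_def indicator_def)
  also have "\<dots> = (\<Sum>d\<le>x. cdf_given_departures p k x j d * pmf (departures q x) d)"
    using set_pmf_departures[of q x] assms by (subst integral_measure_pmf_real[of "{..x}"]) auto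
  finally show ?thesis .
qed

lemma trans_cdf_nonneg: "0 \<le> trans_cdf p q k x j"
  by (simp add: trans_cdf_def)

lemma trans_cdf_policy_cong: "(x \<le> k \<longleftrightarrow> x \<le> k') \<Longrightarrow> trans_cdf p q k x j = trans_cdf p q k' x j"
  by (simp add: trans_cdf_def queue_trans_def thr_policy_def)

lemma trans_cdf_eq_1:
  assumes "0 \<le> p" "p \<le> 1" "0 < q" "q < 1" "x \<le> k \<longrightarrow> x + 1 \<le> j" "x \<le> j"
  shows "trans_cdf p q k x j = 1"
proof -
  have "\<And>d. cdf_given_departures p k x j d = 1"
    using assms by (auto simp: cdf_given_departures_def)
  then show ?thesis
    using trans_cdf_eq_sum[OF assms(1-4)] sum_pmf_departures[OF assms(3,4)] by simp
qed

lemma trans_cdf_diag: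
  assumes "0 \<le> p" "p \<le> 1" "0 < q" "q < 1" "j \<le> k"
  shows "trans_cdf p q k j j = 1 - p * no_departure q j"
proof -
  have "(\<Sum>d\<le>j. cdf_given_departures p k j j d * pmf (departures q j) d) =
        (\<Sum>d\<le>j. pmf (departures q j) d - (if d = 0 then p * pmf (departures q j) d else 0))"
    using assms by (intro sum.cong) (auto simp: cdf_given_departures_def algebra_simps)
  then show ?thesis
    using assms by (simp add: trans_cdf_eq_sum sum_subtractf sum_pmf_departures no_departure_def)
qed

lemma trans_cdf_down_passive:
  assumes "0 \<le> p" "p \<le> 1" "0 < q" "q < 1" "k < x"
  shows "trans_cdf p q k x (x - 1) = 1 - no_departure q x"
proof -
  have "(\<Sum>d\<le>x. cdf_given_departures p k x (x - 1) d * pmf (departures q x) d) =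
        (\<Sum>d\<le>x. pmf (departures q x) d - (if d = 0 then pmf (departures q x) d else 0))"
    using assms by (intro sum.cong) (auto simp: cdf_given_departures_def algebra_simps)
  then show ?thesis
    using assms by (simp add: trans_cdf_eq_sum sum_subtractf sum_pmf_departures no_departure_def)
qed

lemma trans_cdf_pos:
  assumes "0 \<le> p" "p < 1" "0 < q" "q < 1"
  shows "0 < trans_cdf p q k x j"
proof -
  \<comment> \<open>all \<open>x\<close> customers may leave and no arrival be admitted\<close>
  have "0 < cdf_given_departures p k x j x * pmf (departures q x) x"
    using pmf_departures_all_pos[of q x] assms
    by (auto simp: cdf_given_departures_def intro!: add_pos_nonneg)
  also have "\<dots> \<le> (\<Sum>d\<le>x. cdf_given_departures p k x j d * pmf (departures q x) d)"
    using assms by (intro member_le_sum) (auto simp: cdf_given_departures_def)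
  finally show ?thesis using assms by (simp add: trans_cdf_eq_sum)
qed

lemma trans_cdf_active_ge_passive:
  assumes "0 \<le> p" "p \<le> 1" "0 < q" "q < 1" "x \<le> k" "k' < x"
  shows "(1 - p) * trans_cdf p q k' x j \<le> trans_cdf p q k x j"
proof -
  have "(1 - p) * trans_cdf p q k' x j =
        (\<Sum>d\<le>x. (1 - p) * cdf_given_departures p k' x j d * pmf (departures q x) d)"
    using assms by (simp add: trans_cdf_eq_sum sum_distrib_left mult.assoc)
  also have "\<dots> \<le> (\<Sum>d\<le>x. cdf_given_departures p k x j d * pmf (departures q x) d)"
    using assms by (intro sum_mono mult_right_mono) (auto simp: cdf_given_departures_def)
  finally show ?thesis using assms by (simp add: trans_cdf_eq_sum)
qed

lemma stationary_cdf:
  "stationary p q k \<pi> \<Longrightarrow> measure \<pi> {..j} = (\<integral>x. trans_cdf p q k x j \<partial>\<pi>)"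
  unfolding stationary_def trans_cdf_def by (metis measure_bind_pmf)

lemma stationary_support:
  assumes "0 \<le> p" "p < 1" "0 < q" "q < 1" and st: "stationary p q k \<pi>"
  shows "set_pmf \<pi> \<subseteq> {..k+1}"
proof -
  define f where "f x = trans_cdf p q k x (k+1) - indicator {..k+1} x" for x
  have f0: "x \<le> k + 1 \<Longrightarrow> f x = 0" for x
    using trans_cdf_eq_1[of p q x k "k+1"] assms by (simp add: f_def)
  have f_pos: "k + 1 < x \<Longrightarrow> 0 < f x" for x
    using trans_cdf_pos[of p q k x "k+1"] assms by (simp add: f_def)
  have int_cdf: "integrable \<pi> (\<lambda>x. trans_cdf p q k x (k+1))"
    by (rule measure_pmf.integrable_const_bound[where B=1]) (auto simp: trans_cdf_def)
  have int_ind: "integrable \<pi> (\<lambda>x. indicator {..k+1} x :: real)"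
    by (rule measure_pmf.integrable_const_bound[where B=1]) auto
  have "integrable \<pi> f"
    unfolding f_def using int_cdf int_ind by auto
  moreover have "(\<integral>x. f x \<partial>\<pi>) = 0"
    unfolding f_def using int_cdf int_ind stationary_cdf[OF st, of "k+1"] by simp
  moreover have "0 \<le> f x" for x
    using f0 f_pos by (cases "x \<le> k + 1") (auto intro: less_imp_le)
  ultimately have "AE x in \<pi>. f x = 0"
    using integral_nonneg_eq_0_iff_AE by blast
  then show ?thesis
    using f_pos by (force simp: AE_measure_pmf_iff subset_iff not_le[symmetric])
qed

lemma stationary_cdf_sum:
  assumes "0 \<le> p" "p < 1" "0 < q" "q < 1" and st: "stationary p q k \<pi>"
  shows "(\<Sum>x\<le>j. pmf \<pi> x) = (\<Sum>x\<le>k+1. pmf \<pi> x * trans_cdf p q k x j)"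
proof -
  have "(\<Sum>x\<le>j. pmf \<pi> x) = measure \<pi> {..j}"
    by (simp add: measure_measure_pmf_finite)
  also have "\<dots> = (\<integral>x. trans_cdf p q k x j \<partial>\<pi>)"
    by (rule stationary_cdf[OF st])
  also have "\<dots> = (\<Sum>x\<le>k+1. trans_cdf p q k x j * pmf \<pi> x)"
    using stationary_support[OF assms] by (intro integral_measure_pmf_real) auto
  finally show ?thesis by (simp add: mult.commute)
qed

lemma stationary_cut_balance:
  assumes "0 \<le> p" "p < 1" "0 < q" "q < 1" and st: "stationary p q k \<pi>" and "j \<le> k"
  shows "p * no_departure q j * pmf \<pi> j = (\<Sum>x\<in>{j<..k+1}. pmf \<pi> x * trans_cdf p q k x j)"
proof -
  have split: "{..k+1} = {..<j} \<union> {j} \<union> {j<..k+1}" using \<open>j \<le> k\<close> by auto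
  have "(\<Sum>x\<le>k+1. pmf \<pi> x * trans_cdf p q k x j) =
        (\<Sum>x<j. pmf \<pi> x * trans_cdf p q k x j) + pmf \<pi> j * trans_cdf p q k j j
        + (\<Sum>x\<in>{j<..k+1}. pmf \<pi> x * trans_cdf p q k x j)"
    unfolding split by (subst sum.union_disjoint; auto)+
  also have "(\<Sum>x<j. pmf \<pi> x * trans_cdf p q k x j) = (\<Sum>x<j. pmf \<pi> x)"
    using trans_cdf_eq_1[of p q _ k j] assms by (intro sum.cong) auto
  also have "trans_cdf p q k j j = 1 - p * no_departure q j"
    using trans_cdf_diag[of p q j k] assms by simp
  moreover have "(\<Sum>x\<le>j. pmf \<pi> x) = (\<Sum>x<j. pmf \<pi> x) + pmf \<pi> j"
    using sum.lessThan_Suc[of "pmf \<pi>" j] by (simp add: lessThan_Suc_atMost)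
  ultimately show ?thesis
    using stationary_cdf_sum[OF assms(1-5), of j] by (simp add: algebra_simps)
qed

text \<open>\<open>stat_ratio p q k j\<close> is \<open>\<pi>(j) / \<pi>(k+1)\<close>, solved from the cut balance equations downwards.\<close>

function stat_ratio :: "real \<Rightarrow> real \<Rightarrow> nat \<Rightarrow> nat \<Rightarrow> real" where
  "stat_ratio p q k j =
     (if k + 1 \<le> j then 1
      else (\<Sum>x\<in>{j<..k+1}. stat_ratio p q k x * trans_cdf p q k x j) / (p * no_departure q j))"
  by auto
termination by (relation "Wellfounded.measure (\<lambda>(p, q, k, j). k + 1 - j)") auto

declare stat_ratio.simps[simp del]

definition stat_ratio_sum :: "real \<Rightarrow> real \<Rightarrow> nat \<Rightarrow> real" where
  "stat_ratio_sum p q k = (\<Sum>j\<le>k+1. stat_ratio p q k j)"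

lemma stat_ratio_top [simp]: "stat_ratio p q k (Suc k) = 1"
  by (simp add: stat_ratio.simps)

lemma stat_ratio_balance:
  assumes "0 < p" "0 < q" "q < 1" "j \<le> k"
  shows "stat_ratio p q k j * (p * no_departure q j) =
         (\<Sum>x\<in>{j<..k+1}. stat_ratio p q k x * trans_cdf p q k x j)"
  using no_departure_pos[of q j] assms by (subst stat_ratio.simps) simp

lemma stat_ratio_nonneg:
  assumes "0 < p" "0 < q" "q < 1"
  shows "0 \<le> stat_ratio p q k j"
proof (induction "k + 1 - j" arbitrary: j rule: less_induct)
  case less
  have "0 \<le> (\<Sum>x\<in>{j<..k+1}. stat_ratio p q k x * trans_cdf p q k x j)"
    using less by (intro sum_nonneg mult_nonneg_nonneg trans_cdf_nonneg) auto
  then show ?case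
    using no_departure_pos[of q j] assms by (subst stat_ratio.simps) simp
qed

lemma stationary_eq_stat_ratio:
  assumes "0 < p" "p < 1" "0 < q" "q < 1" and st: "stationary p q k \<pi>"
  shows "j \<le> k + 1 \<Longrightarrow> pmf \<pi> j = pmf \<pi> (k+1) * stat_ratio p q k j"
proof (induction "k + 1 - j" arbitrary: j rule: less_induct)
  case less
  show ?case
  proof (cases "j = k + 1")
    case False
    then have "j \<le> k" using less by simp
    have "p * no_departure q j * pmf \<pi> j = (\<Sum>x\<in>{j<..k+1}. pmf \<pi> x * trans_cdf p q k x j)"
      using stationary_cut_balance[of p q k \<pi> j] assms \<open>j \<le> k\<close> by simp
    also have "\<dots> = (\<Sum>x\<in>{j<..k+1}. pmf \<pi> (k+1) * stat_ratio p q k x * trans_cdf p q k x j)"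
    proof (rule sum.cong)
      fix x assume "x \<in> {j<..k+1}"
      then have "k + 1 - x < k + 1 - j" "x \<le> k + 1" by auto
      then show "pmf \<pi> x * trans_cdf p q k x j = pmf \<pi> (k+1) * stat_ratio p q k x * trans_cdf p q k x j"
        using less(1)[of x] by simp
    qed simp
    also have "\<dots> = pmf \<pi> (k+1) * (stat_ratio p q k j * (p * no_departure q j))"
      using stat_ratio_balance[of p q j k] \<open>j \<le> k\<close> assms
      by (simp add: sum_distrib_left mult.assoc)
    finally show ?thesis
      using no_departure_pos[of q j] assms by (simp add: algebra_simps)
  qed simp
qed

lemma stationary_active_mass:
  assumes "0 < p" "p < 1" "0 < q" "q < 1" and st: "stationary p q k \<pi>"
  shows "(\<Sum>j\<le>k. pmf \<pi> j) = 1 - 1 / stat_ratio_sum p q k"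
proof -
  have "(\<Sum>j\<le>k+1. pmf \<pi> j) = 1"
    using sum_pmf_eq_1[of "{..k+1}" \<pi>] stationary_support[of p q k \<pi>] assms by simp
  moreover have "(\<Sum>j\<le>k+1. pmf \<pi> j) = pmf \<pi> (k+1) * stat_ratio_sum p q k"
    unfolding stat_ratio_sum_def sum_distrib_left
  proof (rule sum.cong)
    fix j assume "j \<in> {..k+1}"
    then show "pmf \<pi> j = pmf \<pi> (k+1) * stat_ratio p q k j"
      by (intro stationary_eq_stat_ratio[OF assms]) simp
  qed simp
  ultimately have "pmf \<pi> (k+1) = 1 / stat_ratio_sum p q k"
    by (metis mult_eq_0_iff nonzero_eq_divide_eq zero_neq_one)
  with \<open>(\<Sum>j\<le>k+1. pmf \<pi> j) = 1\<close> show ?thesis by simp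
qed

lemma stat_ratio_sum_ge_1:
  assumes "0 < p" "0 < q" "q < 1"
  shows "1 \<le> stat_ratio_sum p q k"
proof -
  have "stat_ratio p q k (k+1) \<le> stat_ratio_sum p q k"
    unfolding stat_ratio_sum_def using stat_ratio_nonneg[OF assms] by (intro member_le_sum) auto
  then show ?thesis by simp
qed

lemma stat_ratio_Suc_top:
  assumes "0 < p" "2 * p < q" "q < 1"
  shows "1 \<le> (1 - p) * stat_ratio p q (k+1) (k+1)"
proof -
  have "0 < q" using assms by simp
  have "{k+1<..k+1+1} = {k+2}" by auto
  then have balance: "stat_ratio p q (k+1) (k+1) * (p * no_departure q (k+1)) = 1 - no_departure q (k+2)"
    using stat_ratio_balance[of p q "k+1" "k+1"]
      trans_cdf_down_passive[of p q "k+1" "k+2"] assms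
    by simp
  have a_le: "no_departure q (k+1) \<le> 1 / (1 + q)" "no_departure q (k+2) \<le> 1 / (1 + q)"
    using no_departure_le[of q] \<open>0 < q\<close> assms by auto
  have "p * q \<le> p"
    using assms by (simp add: mult_left_le)
  then have "p \<le> (1 - p) * q"
    using assms by (simp only: left_diff_distrib mult_1_left)
  have "p * no_departure q (k+1) \<le> p / (1 + q)"
    using mult_left_mono[OF a_le(1), of p] assms by simp
  also have "\<dots> \<le> (1 - p) * q / (1 + q)"
    using \<open>p \<le> (1 - p) * q\<close> \<open>0 < q\<close> by (intro divide_right_mono) auto
  also have "\<dots> = (1 - p) * (1 - 1 / (1 + q))"
    using \<open>0 < q\<close> by (simp add: field_simps)
  also have "\<dots> \<le> (1 - p) * (1 - no_departure q (k+2))"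
    using a_le assms by (intro mult_left_mono) auto
  also have "\<dots> = p * no_departure q (k+1) * ((1 - p) * stat_ratio p q (k+1) (k+1))"
    unfolding balance[symmetric] by (simp only: ac_simps)
  finally show ?thesis
    using no_departure_pos[of q "k+1"] \<open>0 < q\<close> assms by simp
qed

text \<open>The only state whose transitions change with the threshold is \<open>k + 1\<close>, which turns active.\<close>

lemma stat_ratio_passive_to_active:
  assumes "0 < p" "2 * p < q" "q < 1"
  shows "trans_cdf p q k (k+1) j \<le> stat_ratio p q (k+1) (k+1) * trans_cdf p q (k+1) (k+1) j"
proof -
  have "trans_cdf p q k (k+1) j \<le> (1 - p) * stat_ratio p q (k+1) (k+1) * trans_cdf p q k (k+1) j"
    using stat_ratio_Suc_top[OF assms] trans_cdf_nonneg[of p q k "k+1" j]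
    by (simp add: mult_le_cancel_right1)
  also have "\<dots> = stat_ratio p q (k+1) (k+1) * ((1 - p) * trans_cdf p q k (k+1) j)"
    by simp
  also have "\<dots> \<le> stat_ratio p q (k+1) (k+1) * trans_cdf p q (k+1) (k+1) j"
    using trans_cdf_active_ge_passive[of p q "k+1" "k+1" k j] stat_ratio_nonneg[of p q "k+1" "k+1"]
      assms
    by (intro mult_left_mono) auto
  finally show ?thesis .
qed

lemma stat_ratio_mono_Suc:
  assumes "0 < p" "2 * p < q" "q < 1"
  shows "j \<le> k + 1 \<Longrightarrow> stat_ratio p q k j \<le> stat_ratio p q (k+1) j"
proof (induction "k + 1 - j" arbitrary: j rule: less_induct)
  case less
  have "0 < q" using assms by auto
  have nonneg: "\<And>k j. 0 \<le> stat_ratio p q k j"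
    using stat_ratio_nonneg \<open>0 < q\<close> assms by auto
  show ?case
  proof (cases "j = k + 1")
    case True
    have "(1 - p) * stat_ratio p q (k+1) (k+1) \<le> stat_ratio p q (k+1) (k+1)"
      using nonneg[of "k+1" "k+1"] assms by (intro mult_left_le_one_le) auto
    then have "1 \<le> stat_ratio p q (k+1) (k+1)"
      using stat_ratio_Suc_top[OF assms, of k] by linarith
    then show ?thesis using True by simp
  next
    case False
    then have "j \<le> k" using less by simp
    have "stat_ratio p q k j * (p * no_departure q j) =
          (\<Sum>x\<in>{j<..k+1}. stat_ratio p q k x * trans_cdf p q k x j)"
      using stat_ratio_balance[of p q j k] \<open>j \<le> k\<close> \<open>0 < q\<close> assms by simp
    also have "\<dots> \<le> (\<Sum>x\<in>{j<..k+1}. stat_ratio p q (k+1) x * trans_cdf p q (k+1) x j)"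
    proof (rule sum_mono)
      fix x assume x: "x \<in> {j<..k+1}"
      show "stat_ratio p q k x * trans_cdf p q k x j \<le> stat_ratio p q (k+1) x * trans_cdf p q (k+1) x j"
      proof (cases "x = k + 1")
        case True
        then show ?thesis using stat_ratio_passive_to_active[OF assms] by simp
      next
        case False
        then have "trans_cdf p q k x j = trans_cdf p q (k+1) x j"
          using x by (intro trans_cdf_policy_cong) auto
        moreover have "stat_ratio p q k x \<le> stat_ratio p q (k+1) x"
          using less(1)[of x] x by auto
        ultimately show ?thesis
          using trans_cdf_nonneg[of p q k x j] by (simp add: mult_right_mono)
      qed
    qed
    also have "\<dots> \<le> (\<Sum>x\<in>{j<..k+2}. stat_ratio p q (k+1) x * trans_cdf p q (k+1) x j)"
      using nonneg trans_cdf_nonneg by (intro sum_mono2) auto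
    also have "\<dots> = stat_ratio p q (k+1) j * (p * no_departure q j)"
      using stat_ratio_balance[of p q j "k+1"] \<open>j \<le> k\<close> \<open>0 < q\<close> assms by simp
    finally show ?thesis
      using no_departure_pos[of q j] \<open>0 < q\<close> assms
      by (elim mult_right_le_imp_le) simp
  qed
qed

lemma stat_ratio_sum_mono_Suc:
  assumes "0 < p" "2 * p < q" "q < 1"
  shows "stat_ratio_sum p q k \<le> stat_ratio_sum p q (Suc k)"
proof -
  have "stat_ratio_sum p q k \<le> (\<Sum>j\<le>k+1. stat_ratio p q (k+1) j)"
    unfolding stat_ratio_sum_def using stat_ratio_mono_Suc[OF assms] by (intro sum_mono) auto
  also have "\<dots> \<le> (\<Sum>j\<le>k+2. stat_ratio p q (k+1) j)"
    using stat_ratio_nonneg[of p q] assms by (intro sum_mono2) auto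
  finally show ?thesis by (simp add: stat_ratio_sum_def)
qed

theorem lemma8:
  fixes p q :: real and k k' :: nat and \<pi> \<pi>' :: "nat pmf"
  assumes "0 < p" and "2 * p < q" and "q < 1"
    and "k \<le> k'"
    and "stationary p q k \<pi>" and "stationary p q k' \<pi>'"
  shows "(\<Sum>j\<le>k. pmf \<pi> j) \<le> (\<Sum>j\<le>k'. pmf \<pi>' j)"
proof -
  have "0 < q" "p < 1" using assms by auto
  have "stat_ratio_sum p q k \<le> stat_ratio_sum p q k'"
    using stat_ratio_sum_mono_Suc[OF assms(1-3)] \<open>k \<le> k'\<close> by (rule lift_Suc_mono_le)
  moreover have "1 \<le> stat_ratio_sum p q k"
    using stat_ratio_sum_ge_1 \<open>0 < q\<close> assms by auto
  ultimately have "1 / stat_ratio_sum p q k' \<le> 1 / stat_ratio_sum p q k"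
    by (intro divide_left_mono) auto
  then show ?thesis
    using stationary_active_mass[of p q k \<pi>] stationary_active_mass[of p q k' \<pi>']
      \<open>0 < q\<close> \<open>p < 1\<close> assms
    by simp
qed

end
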